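(* Fix an equation $(f,q,w)$ as in the context with $\prod_{i=0}^{N-1}(1/f_i)>0$, and let $K=(k_{ij})\in SL(2,\mathbb R)$; write $\lambda_j(K)$, $\lambda_j(-K)$ for the eigenvalues with boundary conditions $[K|-I]$, $[-K|-I]$. (i) If $k_{11}-f_0k_{12}>0$, then each of the problems with $[K|-I]$ and $[-K|-I]$ has exactly $N$ eigenvalues; $\lambda_0(K)$ is a simple eigenvalue; if $\lambda_j(K)<\lambda_{j+1}(K)$ for some odd $j$ with $1\le j\le N-2$, then $\lambda_j(K)$ and $\lambda_{j+1}(K)$ are simple; if $\lambda_j(-K)<\lambda_{j+1}(-K)$ for some even $j$ with $0\le j\le N-2$, then $\lambda_j(-K)$ and $\lambda_{j+1}(-K)$ are simple; if $N$ is odd then $\lambda_{N-1}(-K)$ is simple, and if $N$ is even then $\lambda_{N-1}(K)$ is simple. (ii) If $k_{11}-f_0k_{12}<0$, the same conclusions as in (i) hold with $K$ replaced by $-K$ (and $-K$ by $K$).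
   Context: Let $N\ge2$ be an integer. An equation is given by real sequences $f=\{f_n\}_{n=0}^N$, $q=\{q_n\}_{n=1}^N$, $w=\{w_n\}_{n=1}^N$ with $f_n\neq0$, $w_n>0$; it is $-\nabla(f_n\Delta y_n)+q_ny_n=\lambda w_ny_n$, $1\le n\le N$, for $y=\{y_n\}_{n=0}^{N+1}$, $\Delta y_n=y_{n+1}-y_n$, $\nabla y_n=y_n-y_{n-1}$. The boundary condition $[A\,|\,B]$ is $A(y_0,f_0\Delta y_0)^T+B(y_N,f_N\Delta y_N)^T=0$. $SL(2,\mathbb R)$: real $2\times2$ matrices of determinant 1; $I$ the identity. Eigenvalues ($\lambda$ with a nontrivial solution) are real; the multiplicity is the dimension of the solution space (equal to the multiplicity as a zero of the characteristic polynomial); simple means multiplicity one; counted with multiplicity they are ordered $\lambda_0\le\lambda_1\le\cdots$. *)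

theory Defs
  imports "HOL-Analysis.Analysis" "HOL-Library.Multiset" "HOL-Library.Function_Algebras"
begin

text \<open>Sequences are functions on nat; y is indexed 0..N+1, f 0..N, q and w 1..N.\<close>

definition fwd :: "(nat \<Rightarrow> real) \<Rightarrow> nat \<Rightarrow> real" where
  "fwd y n = y (Suc n) - y n"

definition solves_eq :: "nat \<Rightarrow> (nat \<Rightarrow> real) \<Rightarrow> (nat \<Rightarrow> real) \<Rightarrow> (nat \<Rightarrow> real)
    \<Rightarrow> real \<Rightarrow> (nat \<Rightarrow> real) \<Rightarrow> bool" where
  "solves_eq N f q w lam y \<longleftrightarrow>
     (\<forall>n\<in>{1..N}. - (f n * fwd y n - f (n - 1) * fwd y (n - 1)) + q n * y n = lam * w n * y n)"

definition satisfies_bc :: "nat \<Rightarrow> (nat \<Rightarrow> real) \<Rightarrow> real^2^2 \<Rightarrow> real^2^2 \<Rightarrow> (nat \<Rightarrow> real) \<Rightarrow> bool" where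
  "satisfies_bc N f A B y \<longleftrightarrow>
     A *v vector [y 0, f 0 * fwd y 0] + B *v vector [y N, f N * fwd y N] = 0"

text \<open>Solution space for lam: solutions y = {y_n}_{n=0}^{N+1}, represented as functions
  vanishing beyond N+1.\<close>
definition sol_space :: "nat \<Rightarrow> (nat \<Rightarrow> real) \<Rightarrow> (nat \<Rightarrow> real) \<Rightarrow> (nat \<Rightarrow> real)
    \<Rightarrow> real^2^2 \<Rightarrow> real^2^2 \<Rightarrow> real \<Rightarrow> (nat \<Rightarrow> real) set" where
  "sol_space N f q w A B lam =
     {y. (\<forall>n > N + 1. y n = 0) \<and> solves_eq N f q w lam y \<and> satisfies_bc N f A B y}"

definition is_eigenvalue :: "nat \<Rightarrow> (nat \<Rightarrow> real) \<Rightarrow> (nat \<Rightarrow> real) \<Rightarrow> (nat \<Rightarrow> real)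
    \<Rightarrow> real^2^2 \<Rightarrow> real^2^2 \<Rightarrow> real \<Rightarrow> bool" where
  "is_eigenvalue N f q w A B lam \<longleftrightarrow> (\<exists>y \<in> sol_space N f q w A B lam. y \<noteq> (\<lambda>_. 0))"

definition eigenvalues :: "nat \<Rightarrow> (nat \<Rightarrow> real) \<Rightarrow> (nat \<Rightarrow> real) \<Rightarrow> (nat \<Rightarrow> real)
    \<Rightarrow> real^2^2 \<Rightarrow> real^2^2 \<Rightarrow> real set" where
  "eigenvalues N f q w A B = {lam. is_eigenvalue N f q w A B lam}"

definition multiplicity_ev :: "nat \<Rightarrow> (nat \<Rightarrow> real) \<Rightarrow> (nat \<Rightarrow> real) \<Rightarrow> (nat \<Rightarrow> real)
    \<Rightarrow> real^2^2 \<Rightarrow> real^2^2 \<Rightarrow> real \<Rightarrow> nat" where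
  "multiplicity_ev N f q w A B lam =
     vector_space.dim (\<lambda>(c::real) (y::nat \<Rightarrow> real) n. c * y n) (sol_space N f q w A B lam)"

definition eig_mset :: "nat \<Rightarrow> (nat \<Rightarrow> real) \<Rightarrow> (nat \<Rightarrow> real) \<Rightarrow> (nat \<Rightarrow> real)
    \<Rightarrow> real^2^2 \<Rightarrow> real^2^2 \<Rightarrow> real multiset" where
  "eig_mset N f q w A B =
     (\<Sum>lam \<in> eigenvalues N f q w A B. replicate_mset (multiplicity_ev N f q w A B lam) lam)"

definition eig :: "nat \<Rightarrow> (nat \<Rightarrow> real) \<Rightarrow> (nat \<Rightarrow> real) \<Rightarrow> (nat \<Rightarrow> real)
    \<Rightarrow> real^2^2 \<Rightarrow> real^2^2 \<Rightarrow> nat \<Rightarrow> real" where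
  "eig N f q w A B j = sorted_list_of_multiset (eig_mset N f q w A B) ! j"

definition has_n_eigenvalues :: "nat \<Rightarrow> (nat \<Rightarrow> real) \<Rightarrow> (nat \<Rightarrow> real) \<Rightarrow> (nat \<Rightarrow> real)
    \<Rightarrow> real^2^2 \<Rightarrow> real^2^2 \<Rightarrow> nat \<Rightarrow> bool" where
  "has_n_eigenvalues N f q w A B m \<longleftrightarrow>
     finite (eigenvalues N f q w A B) \<and> size (eig_mset N f q w A B) = m"

definition simple_ev :: "nat \<Rightarrow> (nat \<Rightarrow> real) \<Rightarrow> (nat \<Rightarrow> real) \<Rightarrow> (nat \<Rightarrow> real)
    \<Rightarrow> real^2^2 \<Rightarrow> real^2^2 \<Rightarrow> real \<Rightarrow> bool" where
  "simple_ev N f q w A B lam \<longleftrightarrow> is_eigenvalue N f q w A B lam \<and> multiplicity_ev N f q w A B lam = 1"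

definition conclusions :: "nat \<Rightarrow> (nat \<Rightarrow> real) \<Rightarrow> (nat \<Rightarrow> real) \<Rightarrow> (nat \<Rightarrow> real)
    \<Rightarrow> real^2^2 \<Rightarrow> bool" where
  "conclusions N f q w K \<longleftrightarrow>
     (let P = eig N f q w K (- mat 1); M = eig N f q w (- K) (- mat 1);
          sP = simple_ev N f q w K (- mat 1); sM = simple_ev N f q w (- K) (- mat 1) in
     has_n_eigenvalues N f q w K (- mat 1) N \<and>
     has_n_eigenvalues N f q w (- K) (- mat 1) N \<and>
     sP (P 0) \<and>
     (\<forall>j. odd j \<and> 1 \<le> j \<and> j \<le> N - 2 \<and> P j < P (j + 1) \<longrightarrow> sP (P j) \<and> sP (P (j + 1))) \<and>
     (\<forall>j. even j \<and> j \<le> N - 2 \<and> M j < M (j + 1) \<longrightarrow> sM (M j) \<and> sM (M (j + 1))) \<and>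
     (odd N \<longrightarrow> sM (M (N - 1))) \<and>
     (even N \<longrightarrow> sP (P (N - 1))))"

end

theory Submission
  imports Defs "HOL-Computational_Algebra.Fundamental_Theorem_Algebra"
begin

text \<open>Let \<open>\<Phi>(\<lambda>)\<close> be the transfer matrix taking the initial data \<open>(y\<^sub>0, f\<^sub>0\<Delta>y\<^sub>0)\<close> of a solution to
  \<open>(y\<^sub>N, f\<^sub>N\<Delta>y\<^sub>N)\<close>. The eigenvalues for \<open>[K|-I]\<close> are the roots of \<open>det (\<Phi>(\<lambda>) - K)\<close>, a polynomial of
  degree \<open>N\<close> (as \<open>det \<Phi> = 1\<close>) whose leading coefficient has the sign of \<open>-(-1)\<^sup>N (k\<^sub>1\<^sub>1 - f\<^sub>0k\<^sub>1\<^sub>2)\<close>.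
  Green's identity shows that all roots are real and that the order of each root equals the
  dimension of the eigenspace, which is 2 exactly when \<open>\<Phi>(r) = K\<close>. At such a double root the
  polynomial is \<open>(\<lambda> - r)\<^sup>2 H(\<lambda>)\<close> with \<open>H(r)\<close> a positive Gram determinant; comparing with the
  factorisation over all roots, the number of eigenvalues below a double eigenvalue is odd for
  \<open>[K|-I]\<close> and even for \<open>[-K|-I]\<close> when \<open>k\<^sub>1\<^sub>1 - f\<^sub>0k\<^sub>1\<^sub>2 > 0\<close>. Counting positions in the ordered
  list of eigenvalues then rules out double eigenvalues at the indices in the statement.\<close>

definition poly_of_real :: "real poly \<Rightarrow> 'a::real_field \<Rightarrow> 'a" where
  "poly_of_real p z = poly (map_poly of_real p) z"

lemma map_poly_of_real_add:
  "map_poly of_real (p + q) = (map_poly of_real p + map_poly of_real q :: 'a::real_field poly)"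
  by (rule poly_eqI) (simp add: coeff_map_poly)

lemma map_poly_of_real_minus:
  "map_poly of_real (- p) = (- map_poly of_real p :: 'a::real_field poly)"
  by (rule poly_eqI) (simp add: coeff_map_poly)

lemma map_poly_of_real_mult:
  "map_poly of_real (p * q) = (map_poly of_real p * map_poly of_real q :: 'a::real_field poly)"
  by (rule poly_eqI) (simp add: coeff_map_poly coeff_mult of_real_sum)

lemma poly_of_real_0 [simp]: "poly_of_real 0 z = 0"
  by (simp add: poly_of_real_def)

lemma poly_of_real_pCons [simp]: "poly_of_real (pCons a p) z = of_real a + z * poly_of_real p z"
  by (simp add: poly_of_real_def map_poly_pCons)

lemma poly_of_real_add [simp]: "poly_of_real (p + q) z = poly_of_real p z + poly_of_real q z"
  by (simp add: poly_of_real_def map_poly_of_real_add)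

lemma poly_of_real_minus [simp]: "poly_of_real (- p) z = - poly_of_real p z"
  by (simp add: poly_of_real_def map_poly_of_real_minus)

lemma poly_of_real_diff [simp]: "poly_of_real (p - q) z = poly_of_real p z - poly_of_real q z"
  using poly_of_real_add[of p "- q" z] by simp

lemma poly_of_real_mult [simp]: "poly_of_real (p * q) z = poly_of_real p z * poly_of_real q z"
  by (simp add: poly_of_real_def map_poly_of_real_mult)

lemma poly_of_real_smult [simp]: "poly_of_real (smult c p) z = of_real c * poly_of_real p z"
  by (simp add: poly_of_real_def map_poly_smult)

lemma poly_of_real_real [simp]: "poly_of_real p (x :: real) = poly p x"
  by (simp add: poly_of_real_def)

lemma poly_of_real_of_real: "poly_of_real p (of_real x :: 'a::real_field) = of_real (poly p x)"
  by (induction p) auto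

lemma kernel2_line:
  fixes d11 d12 d21 d22 :: "'a::field"
  assumes row: "(d11, d12) \<noteq> (0, 0)" and det: "d11 * d22 - d12 * d21 = 0"
  shows "{(a, c). d11 * a + d12 * c = 0 \<and> d21 * a + d22 * c = 0} = range (\<lambda>t. (t * d12, - t * d11))"
proof (intro set_eqI iffI)
  fix x assume "x \<in> {(a, c). d11 * a + d12 * c = 0 \<and> d21 * a + d22 * c = 0}"
  then obtain a c where x: "x = (a, c)" and e: "d11 * a + d12 * c = 0" by auto
  show "x \<in> range (\<lambda>t. (t * d12, - t * d11))"
  proof (cases "d12 = 0")
    case True
    with row e have "d11 \<noteq> 0" "a = 0" by auto
    with True show ?thesis unfolding x by (intro range_eqI[of _ _ "- c / d11"]) auto
  next
    case False
    from e have "d12 * c = - (d11 * a)" by (simp add: eq_neg_iff_add_eq_0 add.commute)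
    with False have "c = - (a / d12) * d11" by (simp add: field_simps)
    with False show ?thesis unfolding x by (intro range_eqI[of _ _ "a / d12"]) auto
  qed
next
  fix x assume "x \<in> range (\<lambda>t. (t * d12, - t * d11))"
  then obtain t where x: "x = (t * d12, - t * d11)" by auto
  have "d21 * (t * d12) + d22 * (- t * d11) = - t * (d11 * d22 - d12 * d21)"
    by (simp add: algebra_simps)
  with det show "x \<in> {(a, c). d11 * a + d12 * c = 0 \<and> d21 * a + d22 * c = 0}"
    unfolding x by (simp add: algebra_simps)
qed

lemma kernel2_trivial:
  fixes d11 d12 d21 d22 :: "'a::field"
  assumes det: "d11 * d22 - d12 * d21 \<noteq> 0"
  shows "{(a, c). d11 * a + d12 * c = 0 \<and> d21 * a + d22 * c = 0} = {(0, 0)}"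
proof (intro set_eqI iffI)
  fix x assume "x \<in> {(a, c). d11 * a + d12 * c = 0 \<and> d21 * a + d22 * c = 0}"
  then obtain a c where x: "x = (a, c)" and e1: "d11 * a + d12 * c = 0" and e2: "d21 * a + d22 * c = 0"
    by auto
  have "(d11 * d22 - d12 * d21) * a = d22 * (d11 * a + d12 * c) - d12 * (d21 * a + d22 * c)"
    by (simp add: algebra_simps)
  with e1 e2 det have "a = 0" by simp
  have "(d11 * d22 - d12 * d21) * c = d11 * (d21 * a + d22 * c) - d21 * (d11 * a + d12 * c)"
    by (simp add: algebra_simps)
  with e1 e2 det have "c = 0" by simp
  with \<open>a = 0\<close> show "x \<in> {(0, 0)}" unfolding x by simp
qed auto

lemma kernel2_nontrivial:
  fixes d11 d12 d21 d22 :: "'a::field"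
  assumes det: "d11 * d22 - d12 * d21 = 0"
  obtains a c where "(a, c) \<noteq> (0, 0)" "d11 * a + d12 * c = 0" "d21 * a + d22 * c = 0"
proof (cases "(d11, d12) = (0, 0)")
  case False
  from kernel2_line[OF this det] have "(1 * d12, - 1 * d11) \<in> {(a, c). d11 * a + d12 * c = 0 \<and> d21 * a + d22 * c = 0}"
    by blast
  with False show ?thesis by (intro that[of d12 "- d11"]) auto
next
  case row1: True
  show ?thesis
  proof (cases "(d21, d22) = (0, 0)")
    case True
    with row1 show ?thesis by (intro that[of 1 0]) auto
  next
    case False
    with row1 show ?thesis by (intro that[of d22 "- d21"]) (auto simp: algebra_simps)
  qed
qed

lemma dim_kernel2:
  fixes d11 d12 d21 d22 :: real
  shows "dim {(a, c). d11 * a + d12 * c = 0 \<and> d21 * a + d22 * c = 0} =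
    (if d11 = 0 \<and> d12 = 0 \<and> d21 = 0 \<and> d22 = 0 then 2 else if d11 * d22 - d12 * d21 = 0 then 1 else 0)"
    (is "dim ?V = _")
proof -
  have dim_line: "dim (range (\<lambda>t. (t * v1, - t * v2))) = 1" if "(v2, v1) \<noteq> (0, 0)" for v1 v2 :: real
  proof -
    have "range (\<lambda>t. (t * v1, - t * v2)) = span {(v1, - v2)}"
      by (auto simp: span_singleton)
    with that show ?thesis by (auto simp: dim_span zero_prod_def)
  qed
  consider (zero) "d11 = 0 \<and> d12 = 0 \<and> d21 = 0 \<and> d22 = 0"
    | (row1) "(d11, d12) \<noteq> (0, 0)" "d11 * d22 - d12 * d21 = 0"
    | (row2) "(d11, d12) = (0, 0)" "(d21, d22) \<noteq> (0, 0)"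
    | (regular) "d11 * d22 - d12 * d21 \<noteq> 0"
    by fastforce
  then show ?thesis
  proof cases
    case zero
    then have "?V = UNIV" by auto
    with zero show ?thesis by simp
  next
    case row1
    with dim_line show ?thesis unfolding kernel2_line[OF row1] by auto
  next
    case row2
    have "?V = {(a, c). d21 * a + d22 * c = 0 \<and> d11 * a + d12 * c = 0}" by auto
    also have "\<dots> = range (\<lambda>t. (t * d22, - t * d21))"
      using row2 by (intro kernel2_line) auto
    finally show ?thesis using row2 dim_line by auto
  next
    case regular
    then have "?V = {0}" unfolding kernel2_trivial[OF regular] by (simp add: zero_prod_def)
    with regular show ?thesis by auto
  qed
qed

lemma unimodular_perturbation:
  fixes A B C D T1 F1 T2 F2 G11 G12 G21 G22 e :: real
  assumes h1: "A * T2 - C * T1 = e * G11" and h2: "A * F2 - C * F1 - 1 = e * G12"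
    and h3: "B * T2 - D * T1 + 1 = e * G21" and h4: "B * F2 - D * F1 = e * G22" and det: "A * D - B * C = 1"
  shows "T1 = A + e * (B * G11 - A * G21)" "F1 = B + e * (B * G12 - A * G22)"
        "T2 = C + e * (D * G11 - C * G21)" "F2 = D + e * (D * G12 - C * G22)"
proof -
  have det': "\<And>x. (A * D - B * C) * x = x" using det by simp
  have "B * (A * T2 - C * T1) - A * (B * T2 - D * T1 + 1) = (A * D - B * C) * T1 - A"
    by (simp add: algebra_simps)
  then have "T1 - A = B * (e * G11) - A * (e * G21)" unfolding h1 h3 det' by simp
  then show "T1 = A + e * (B * G11 - A * G21)" by (simp add: algebra_simps)
  have "B * (A * F2 - C * F1 - 1) - A * (B * F2 - D * F1) = (A * D - B * C) * F1 - B"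
    by (simp add: algebra_simps)
  then have "F1 - B = B * (e * G12) - A * (e * G22)" unfolding h2 h4 det' by simp
  then show "F1 = B + e * (B * G12 - A * G22)" by (simp add: algebra_simps)
  have "D * (A * T2 - C * T1) - C * (B * T2 - D * T1 + 1) = (A * D - B * C) * T2 - C"
    by (simp add: algebra_simps)
  then have "T2 - C = D * (e * G11) - C * (e * G21)" unfolding h1 h3 det' by simp
  then show "T2 = C + e * (D * G11 - C * G21)" by (simp add: algebra_simps)
  have "D * (A * F2 - C * F1 - 1) - C * (B * F2 - D * F1) = (A * D - B * C) * F2 - D"
    by (simp add: algebra_simps)
  then have "F2 - D = D * (e * G12) - C * (e * G22)" unfolding h2 h4 det' by simp
  then show "F2 = D + e * (D * G12 - C * G22)" by (simp add: algebra_simps)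
qed

lemma det2_perturbation:
  fixes d11 d12 d21 d22 E11 E12 E21 E22 e :: "'a::comm_ring_1"
  shows "(d11 + e * E11) * (d22 + e * E22) - (d12 + e * E12) * (d21 + e * E21) =
    (d11 * d22 - d12 * d21) + e * (d11 * E22 + d22 * E11 - d12 * E21 - d21 * E12) + e^2 * (E11 * E22 - E12 * E21)"
  by (simp add: algebra_simps power2_eq_square)

lemma pos_def_form_det_pos:
  fixes G11 G12 G22 :: real
  assumes pd: "\<And>x1 x2. (x1, x2) \<noteq> (0, 0) \<Longrightarrow> x1^2 * G11 + 2 * x1 * x2 * G12 + x2^2 * G22 > 0"
  shows "G11 * G22 - G12 * G12 > 0"
proof -
  have G11: "G11 > 0" using pd[of 1 0] by simp
  have "G12^2 * G11 + 2 * G12 * (- G11) * G12 + (- G11)^2 * G22 = G11 * (G11 * G22 - G12 * G12)"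
    by (simp add: algebra_simps power2_eq_square)
  with pd[of G12 "- G11"] G11 show ?thesis by (simp add: zero_less_mult_iff)
qed

text \<open>A nonzero trace-free singular matrix \<open>((a, b), (c, -a))\<close> satisfies \<open>b c = -a\<^sup>2\<close>, so the pairing
  below is, up to the factor \<open>-b\<close> (or \<open>c\<close> when \<open>b = 0\<close>), a value of the positive definite form.\<close>

lemma nilpotent2_pairing_nonzero:
  fixes a b c d G11 G12 G22 :: real
  assumes trace: "a + d = 0" and det: "a * d - b * c = 0" and nonzero: "(a, b, c) \<noteq> (0, 0, 0)"
    and pd: "\<And>x1 x2. (x1, x2) \<noteq> (0, 0) \<Longrightarrow> x1^2 * G11 + 2 * x1 * x2 * G12 + x2^2 * G22 > 0"
  shows "- b * G11 + (a - d) * G12 + c * G22 \<noteq> 0"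
proof -
  from trace have d: "d = - a" by simp
  with det have bc: "b * c = - (a * a)" by simp
  show ?thesis
  proof (cases "b = 0")
    case True
    with bc nonzero have "a = 0" "c \<noteq> 0" by auto
    with True d pd[of 0 1] show ?thesis by simp
  next
    case False
    have "- b * (- b * G11 + (a - d) * G12 + c * G22) = b^2 * G11 + 2 * b * (- a) * G12 + (- a)^2 * G22"
      using d bc by (simp add: algebra_simps power2_eq_square)
    with pd[of b "- a"] False show ?thesis by auto
  qed
qed

lemma det2_first_order_nonzero:
  fixes A B C D k11 k12 k21 k22 G11 G12 G22 :: real
  assumes det: "A * D - B * C = 1" and det_k: "k11 * k22 - k12 * k21 = 1"
    and singular: "(A - k11) * (D - k22) - (B - k12) * (C - k21) = 0"
    and ne: "\<not> (A = k11 \<and> B = k12 \<and> C = k21 \<and> D = k22)"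
    and pd: "\<And>x1 x2. (x1, x2) \<noteq> (0, 0) \<Longrightarrow> x1^2 * G11 + 2 * x1 * x2 * G12 + x2^2 * G22 > 0"
  shows "(A - k11) * (D * G12 - C * G22) + (D - k22) * (B * G11 - A * G12)
        - (B - k12) * (D * G11 - C * G12) - (C - k21) * (B * G12 - A * G22) \<noteq> 0"
proof -
  text \<open>\<open>((a, b), (c, d)) = adj K \<cdot> ((A, B), (C, D)) - I\<close>\<close>
  define a where "a = k22 * A - k12 * C - 1"
  define b where "b = k22 * B - k12 * D"
  define c where "c = k11 * C - k21 * A"
  define d where "d = k11 * D - k21 * B - 1"
  have "(A - k11) * (D - k22) - (B - k12) * (C - k21) = (A * D - B * C) + (k11 * k22 - k12 * k21) - (a + d + 2)"
    unfolding a_def d_def by (simp add: algebra_simps)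
  with det det_k singular have trace: "a + d = 0" by simp
  have "a * d - b * c = (A * D - B * C) * (k11 * k22 - k12 * k21) - (a + d + 2) + 1"
    unfolding a_def b_def c_def d_def by (simp add: algebra_simps)
  with det det_k trace have det_abcd: "a * d - b * c = 0" by simp
  have "(a, b, c) \<noteq> (0, 0, 0)"
  proof
    assume "(a, b, c) = (0, 0, 0)"
    with trace have zero: "a = 0" "b = 0" "c = 0" "d = 0" by auto
    have "(k11 * (a + 1) + k12 * c, k11 * b + k12 * (d + 1), k21 * (a + 1) + k22 * c, k21 * b + k22 * (d + 1))
        = ((k11 * k22 - k12 * k21) * A, (k11 * k22 - k12 * k21) * B, (k11 * k22 - k12 * k21) * C,
           (k11 * k22 - k12 * k21) * D)"
      unfolding a_def b_def c_def d_def by (simp add: algebra_simps)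
    with ne zero show False unfolding det_k by simp
  qed
  moreover have "(A - k11) * (D * G12 - C * G22) + (D - k22) * (B * G11 - A * G12)
        - (B - k12) * (D * G11 - C * G12) - (C - k21) * (B * G12 - A * G22) = - b * G11 + (a - d) * G12 + c * G22"
    unfolding a_def b_def c_def d_def by (simp add: algebra_simps)
  ultimately show ?thesis using nilpotent2_pairing_nonzero[OF trace det_abcd _ pd] by simp
qed

lemma order_linear_power_mult:
  fixes r :: real
  assumes "p = [:-r, 1:]^n * h" "poly h r \<noteq> 0"
  shows "order r p = n"
proof -
  from assms(2) have "h \<noteq> 0" by auto
  with assms show ?thesis by (simp add: order_mult order_power_n_n order_0I)
qed

section \<open>Real-rooted polynomials\<close>

lemma real_rooted_poly_splits:
  fixes p :: "real poly"
  assumes "\<And>z::complex. poly (map_poly of_real p) z = 0 \<Longrightarrow> z \<in> \<real>"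
  shows "p = smult (lead_coeff p) (\<Prod>x\<in>#proots p. [:-x, 1:]) \<and> size (proots p) = degree p"
  using assms
proof (induction p rule: poly_root_induct[where P = "\<lambda>_. True"])
  case (no_roots p)
  have "degree p = 0"
  proof (rule ccontr)
    assume "degree p \<noteq> 0"
    then obtain z :: complex where z: "poly (map_poly of_real p) z = 0"
      using fundamental_theorem_of_algebra[of "map_poly of_real p"] by (auto simp: constant_degree degree_map_poly)
    with no_roots.prems obtain x where "z = of_real x" by (blast elim: Reals_cases)
    with z have "of_real (poly p x) = (0 :: complex)"
      by (simp add: poly_of_real_of_real flip: poly_of_real_def)
    with no_roots.hyps show False by simp
  qed
  then show ?case by (auto elim: degree_eq_zeroE)
next
  case (root a p)
  have "z \<in> \<real>" if "poly (map_poly of_real p) z = 0" for z :: complex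
    using root.prems[of z] that by (simp flip: poly_of_real_def)
  then have IH: "p = smult (lead_coeff p) (\<Prod>x\<in>#proots p. [:-x, 1:])" "size (proots p) = degree p"
    using root.IH by auto
  show ?case
  proof (cases "p = 0")
    case False
    define P where "P = (\<Prod>x\<in>#proots p. [:-x, 1:])"
    have linear: "[:a, -1:] = - [:-a, 1:]" by simp
    have "proots [:a, -1:] = {#a#}"
      by (subst linear, subst proots_uminus) simp
    with False have roots: "proots ([:a, -1:] * p) = add_mset a (proots p)"
      by (subst proots_mult) simp_all
    have prod: "[:a, -1:] * p = smult (- lead_coeff p) ([:-a, 1:] * P)"
      unfolding P_def by (subst IH(1), rule poly_ext) (simp add: algebra_simps)
    have lc: "lead_coeff ([:a, -1:] * p) = - lead_coeff p"
      by (simp only: lead_coeff_mult) simp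
    have "(\<Prod>x\<in>#proots ([:a, -1:] * p). [:-x, 1:]) = [:-a, 1:] * P"
      unfolding roots P_def by simp
    then have "[:a, -1:] * p = smult (lead_coeff ([:a, -1:] * p)) (\<Prod>x\<in>#proots ([:a, -1:] * p). [:-x, 1:])"
      unfolding lc by (simp only: prod)
    moreover have "degree ([:a, -1:] * p) = Suc (degree p)"
      using degree_mult_eq[of "[:a, -1:]" p] False by (simp del: mult_pCons_left)
    ultimately show ?thesis
      using IH(2) by (simp only: roots size_add_mset)
  qed simp
qed simp

lemma sign_prod_mset_diff:
  fixes R :: "real multiset"
  assumes "r \<notin># R"
  shows "(-1)^(size (filter_mset (\<lambda>x. r < x) R)) * (\<Prod>x\<in>#R. r - x) > 0"
  using assms
proof (induction R)
  case (add a R)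
  then have IH: "(-1)^(size (filter_mset (\<lambda>x. r < x) R)) * (\<Prod>x\<in>#R. r - x) > 0" and "a \<noteq> r" by auto
  then consider "r < a" | "a < r" by linarith
  then show ?case
  proof cases
    case 1
    then have "(-1)^(size (filter_mset (\<lambda>x. r < x) (add_mset a R))) * (\<Prod>x\<in>#add_mset a R. r - x) =
       ((-1)^(size (filter_mset (\<lambda>x. r < x) R)) * (\<Prod>x\<in>#R. r - x)) * (a - r)"
      by (simp add: algebra_simps)
    with mult_pos_pos[OF IH, of "a - r"] 1 show ?thesis by simp
  next
    case 2
    then have "(-1)^(size (filter_mset (\<lambda>x. r < x) (add_mset a R))) * (\<Prod>x\<in>#add_mset a R. r - x) =
       ((-1)^(size (filter_mset (\<lambda>x. r < x) R)) * (\<Prod>x\<in>#R. r - x)) * (r - a)"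
      by (simp add: algebra_simps)
    with mult_pos_pos[OF IH, of "r - a"] 2 show ?thesis by (simp add: mult_ac)
  qed
qed simp

lemma length_filter_le_eq:
  fixes v :: "'a::linorder"
  shows "length (filter (\<lambda>x. x \<le> v) L) = length (filter (\<lambda>x. x < v) L) + count (mset L) v"
  by (induction L) auto

lemma sorted_nth_less_length_filter_iff:
  fixes L :: "'a::linorder list"
  assumes "sorted L" "i < length L" and down: "\<And>x y. P y \<Longrightarrow> x \<le> y \<Longrightarrow> P x"
  shows "i < length (filter P L) \<longleftrightarrow> P (L ! i)"
  using assms(1,2)
proof (induction L arbitrary: i)
  case (Cons x L)
  then have IH: "j < length L \<Longrightarrow> j < length (filter P L) \<longleftrightarrow> P (L ! j)" for j by auto
  show ?case
  proof (cases "P x")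
    case True
    with IH Cons.prems(2) show ?thesis by (cases i) auto
  next
    case False
    have none: "\<forall>y \<in> set (x # L). \<not> P y"
      using Cons.prems(1) down False by auto
    moreover have "(x # L) ! i \<in> set (x # L)" using Cons.prems(2) by (rule nth_mem)
    ultimately have "\<not> P ((x # L) ! i)" by blast
    moreover have "filter P (x # L) = []" using none by (simp only: filter_empty_conv)
    ultimately show ?thesis by simp
  qed
qed simp

lemma sorted_count_below_nth:
  fixes L :: "'a::linorder list"
  assumes "sorted L" "i < length L" and "i = 0 \<or> L ! (i - 1) < L ! i"
  shows "length (filter (\<lambda>x. x < L ! i) L) = i"
proof -
  have iff: "j < length (filter (\<lambda>x. x < L ! i) L) \<longleftrightarrow> L ! j < L ! i" if "j < length L" for j
    using that by (rule sorted_nth_less_length_filter_iff[OF assms(1)]) auto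
  have "\<not> i < length (filter (\<lambda>x. x < L ! i) L)" using iff[OF assms(2)] by auto
  moreover have "i - 1 < length (filter (\<lambda>x. x < L ! i) L)" if "i > 0"
    using iff[of "i - 1"] assms(2,3) that by auto
  ultimately show ?thesis by linarith
qed

lemma sorted_count_below_double:
  fixes L :: "'a::linorder list"
  assumes "sorted L" "i < length L" and double: "count (mset L) (L ! i) = 2"
    and last: "Suc i = length L \<or> L ! i < L ! Suc i"
  shows "length (filter (\<lambda>x. x < L ! i) L) + 1 = i"
proof -
  have iff: "j < length (filter (\<lambda>x. x \<le> L ! i) L) \<longleftrightarrow> L ! j \<le> L ! i" if "j < length L" for j
    using that by (rule sorted_nth_less_length_filter_iff[OF assms(1)]) auto
  have "i < length (filter (\<lambda>x. x \<le> L ! i) L)" using iff[OF assms(2)] by auto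
  moreover have "length (filter (\<lambda>x. x \<le> L ! i) L) \<le> Suc i"
  proof (cases "Suc i < length L")
    case False
    with assms(2) have "Suc i = length L" by simp
    then show ?thesis using length_filter_le[of "\<lambda>x. x \<le> L ! i" L] by simp
  qed (use last iff[of "Suc i"] in auto)
  ultimately show ?thesis using length_filter_le_eq[of "L ! i" L] double by simp
qed

definition double_parity :: "'a::linorder list \<Rightarrow> bool \<Rightarrow> bool" where
  "double_parity L e \<longleftrightarrow> (\<forall>x. count (mset L) x \<le> 2) \<and>
     (\<forall>x. count (mset L) x = 2 \<longrightarrow> even (length (filter (\<lambda>y. y < x) L)) = e)"

lemma double_parity_nth:
  assumes "double_parity L e" "i < length L" "count (mset L) (L ! i) \<noteq> 1"
  shows "count (mset L) (L ! i) = 2" "even (length (filter (\<lambda>y. y < L ! i) L)) = e"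
proof -
  have "count (mset L) (L ! i) \<ge> 1" using assms(2) by (simp add: Suc_le_eq)
  moreover have "count (mset L) (L ! i) \<le> 2" using assms(1) by (simp add: double_parity_def)
  ultimately show "count (mset L) (L ! i) = 2" using assms(3) by linarith
  with assms(1) show "even (length (filter (\<lambda>y. y < L ! i) L)) = e" by (simp add: double_parity_def)
qed

lemma double_parity_first:
  assumes "sorted L" "double_parity L False" "L \<noteq> []"
  shows "count (mset L) (L ! 0) = 1"
  using double_parity_nth[OF assms(2), of 0] sorted_count_below_nth[OF assms(1), of 0] assms(3) by auto

lemma double_parity_gap:
  assumes "sorted L" "double_parity L e" "Suc j < length L" "L ! j < L ! Suc j" "even j = e"
  shows "count (mset L) (L ! j) = 1" "count (mset L) (L ! Suc j) = 1"
proof -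
  show "count (mset L) (L ! j) = 1"
  proof (rule ccontr)
    assume "count (mset L) (L ! j) \<noteq> 1"
    with double_parity_nth[OF assms(2)] assms(3) sorted_count_below_double[OF assms(1)] assms(4,5)
    show False by (metis Suc_lessD even_add odd_one)
  qed
  show "count (mset L) (L ! Suc j) = 1"
  proof (rule ccontr)
    assume "count (mset L) (L ! Suc j) \<noteq> 1"
    with double_parity_nth[OF assms(2) assms(3)] sorted_count_below_nth[OF assms(1,3)] assms(4,5)
    show False by simp
  qed
qed

lemma double_parity_last:
  assumes "sorted L" "double_parity L e" "L \<noteq> []" "even (length L) \<noteq> e"
  shows "count (mset L) (L ! (length L - 1)) = 1"
proof (rule ccontr)
  let ?i = "length L - 1"
  let ?b = "length (filter (\<lambda>y. y < L ! ?i) L)"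
  assume "count (mset L) (L ! ?i) \<noteq> 1"
  moreover have i: "?i < length L" "Suc ?i = length L" using assms(3) by auto
  ultimately have "count (mset L) (L ! ?i) = 2" and parity: "even ?b = e"
    using double_parity_nth[OF assms(2)] by blast+
  with sorted_count_below_double[OF assms(1) i(1)] i(2) have "?b + 2 = length L" by simp
  then have "even (length L) = even ?b" by presburger
  with parity assms(4) show False by simp
qed

section \<open>The transfer recursion\<close>

text \<open>\<open>shoot f q w z a c n = (y\<^sub>n, f\<^sub>n\<Delta>y\<^sub>n)\<close> for the solution of the difference equation with spectral
  parameter \<open>z\<close> (real or complex) and initial data \<open>y\<^sub>0 = a\<close>, \<open>f\<^sub>0\<Delta>y\<^sub>0 = c\<close>; \<open>shoot_poly\<close> runs the same
  recursion with \<open>z\<close> replaced by the indeterminate.\<close>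

fun shoot :: "(nat \<Rightarrow> real) \<Rightarrow> (nat \<Rightarrow> real) \<Rightarrow> (nat \<Rightarrow> real) \<Rightarrow> 'a::real_field \<Rightarrow> 'a \<Rightarrow> 'a \<Rightarrow> nat \<Rightarrow> 'a \<times> 'a" where
  "shoot f q w z a c 0 = (a, c)"
| "shoot f q w z a c (Suc n) = (let Y = shoot f q w z a c n; y' = fst Y + snd Y * of_real (1 / f n) in
      (y', snd Y + (of_real (q (Suc n)) - z * of_real (w (Suc n))) * y'))"

fun shoot_poly :: "(nat \<Rightarrow> real) \<Rightarrow> (nat \<Rightarrow> real) \<Rightarrow> (nat \<Rightarrow> real) \<Rightarrow> real \<Rightarrow> real \<Rightarrow> nat \<Rightarrow> real poly \<times> real poly" where
  "shoot_poly f q w a c 0 = ([:a:], [:c:])"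
| "shoot_poly f q w a c (Suc n) = (let Y = shoot_poly f q w a c n; y' = fst Y + smult (1 / f n) (snd Y) in
      (y', snd Y + [:q (Suc n), - w (Suc n):] * y'))"

lemma shoot_eq_poly:
  "shoot f q w z a c n =
    (a * poly_of_real (fst (shoot_poly f q w 1 0 n)) z + c * poly_of_real (fst (shoot_poly f q w 0 1 n)) z,
     a * poly_of_real (snd (shoot_poly f q w 1 0 n)) z + c * poly_of_real (snd (shoot_poly f q w 0 1 n)) z)"
  by (induction n) (auto simp: Let_def algebra_simps add_divide_distrib[symmetric])

lemma shoot_wronskian:
  "fst (shoot f q w z 1 0 n) * snd (shoot f q w z 0 1 n) - fst (shoot f q w z 0 1 n) * snd (shoot f q w z 1 0 n) = 1"
  by (induction n) (auto simp: Let_def algebra_simps)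

lemma shoot_cnj:
  "shoot f q w (cnj z) (cnj a) (cnj c) n = (cnj (fst (shoot f q w z a c n)), cnj (snd (shoot f q w z a c n)))"
  by (induction n) (auto simp: Let_def)

lemma green_step:
  fixes y u y2 u2 s qq ww z m :: "'a::field"
  assumes "yy = y + u * s" "uu = u + (qq - z * ww) * yy" "yy2 = y2 + u2 * s" "uu2 = u2 + (qq - m * ww) * yy2"
  shows "yy2 * uu - uu2 * yy = y2 * u - u2 * y + (m - z) * (ww * yy * yy2)"
  unfolding assms(2,4) by (simp add: assms(1,3) algebra_simps)

text \<open>Green's identity: the Wronskian of two solutions changes by the weighted inner product.\<close>

lemma shoot_green:
  "fst (shoot f q w m b d n) * snd (shoot f q w z a c n) - snd (shoot f q w m b d n) * fst (shoot f q w z a c n)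
   - (b * c - d * a) = (m - z) * (\<Sum>k\<in>{1..n}. of_real (w k) * fst (shoot f q w z a c k) * fst (shoot f q w m b d k))"
proof (induction n)
  case (Suc n)
  define Y where "Y = shoot f q w z a c"
  define Z where "Z = shoot f q w m b d"
  have step: "fst (Z (Suc n)) * snd (Y (Suc n)) - snd (Z (Suc n)) * fst (Y (Suc n)) =
     fst (Z n) * snd (Y n) - snd (Z n) * fst (Y n) + (m - z) * (of_real (w (Suc n)) * fst (Y (Suc n)) * fst (Z (Suc n)))"
    by (rule green_step[where s = "of_real (1 / f n)" and qq = "of_real (q (Suc n))"])
      (simp_all add: Let_def Y_def Z_def)
  have "{1..Suc n} = insert (Suc n) {1..n}" by auto
  then have sum: "(\<Sum>k\<in>{1..Suc n}. of_real (w k) * fst (Y k) * fst (Z k)) =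
     of_real (w (Suc n)) * fst (Y (Suc n)) * fst (Z (Suc n)) + (\<Sum>k\<in>{1..n}. of_real (w k) * fst (Y k) * fst (Z k))"
    by simp
  show ?case
    using Suc unfolding Y_def[symmetric] Z_def[symmetric] step sum by (simp add: algebra_simps)
qed simp

lemma coeff_linear_mult: "coeff ([:x, y:] * p) (Suc n) = x * coeff p (Suc n) + y * coeff p n"
  by (simp add: mult_pCons_left)

lemma degree_linear_mult: "degree ([:x, y:] * p) \<le> Suc (degree p)"
  using degree_mult_le[of "[:x, y:]" p] by (simp add: degree_pCons_eq_if split: if_splits)

lemma shoot_poly_degree:
  "degree (fst (shoot_poly f q w a c (Suc m))) \<le> m \<and>
   coeff (fst (shoot_poly f q w a c (Suc m))) m = (-1)^m * (a + c / f 0) * (\<Prod>i\<in>{1..m}. w i / f i) \<and>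
   degree (snd (shoot_poly f q w a c (Suc m))) \<le> Suc m \<and>
   coeff (snd (shoot_poly f q w a c (Suc m))) (Suc m) =
     (-1)^Suc m * (a + c / f 0) * (\<Prod>i\<in>{1..m}. w i / f i) * w (Suc m)"
proof (induction m)
  case 0
  have y: "fst (shoot_poly f q w a c 1) = [:a + c / f 0:]"
    and u: "snd (shoot_poly f q w a c 1) = [:c:] + [:q 1, - w 1:] * [:a + c / f 0:]"
    by (simp_all add: Let_def)
  have "degree ([:q 1, - w 1:] * [:a + c / f 0:]) \<le> 1"
    using degree_linear_mult[of "q 1" "- w 1" "[:a + c / f 0:]"] by simp
  then have "degree (snd (shoot_poly f q w a c 1)) \<le> 1"
    unfolding u by (intro degree_add_le) auto
  moreover have "coeff (snd (shoot_poly f q w a c 1)) 1 = - (a + c / f 0) * w 1"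
    unfolding u using coeff_linear_mult[of "q 1" "- w 1" "[:a + c / f 0:]" 0] by (simp add: algebra_simps)
  ultimately show ?case using y by simp
next
  case (Suc m)
  define y where "y = fst (shoot_poly f q w a c (Suc m))"
  define u where "u = snd (shoot_poly f q w a c (Suc m))"
  define y' where "y' = y + smult (1 / f (Suc m)) u"
  define P where "P = (a + c / f 0) * (\<Prod>i\<in>{1..m}. w i / f i)"
  have dy: "degree y \<le> m" and du: "degree u \<le> Suc m" and cu: "coeff u (Suc m) = (-1)^Suc m * P * w (Suc m)"
    using Suc unfolding y_def u_def P_def by (auto simp: mult.assoc)
  have y2: "fst (shoot_poly f q w a c (Suc (Suc m))) = y'"
    and u2: "snd (shoot_poly f q w a c (Suc (Suc m))) = u + [:q (Suc (Suc m)), - w (Suc (Suc m)):] * y'"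
    by (simp_all add: Let_def y_def u_def y'_def)
  have dy': "degree y' \<le> Suc m"
    unfolding y'_def using dy du by (intro degree_add_le order_trans[OF degree_smult_le]) auto
  have "(\<Prod>i\<in>{1..Suc m}. w i / f i) = (\<Prod>i\<in>{1..m}. w i / f i) * (w (Suc m) / f (Suc m))"
    by (simp add: atLeastAtMostSuc_conv mult.commute)
  then have cy': "coeff y' (Suc m) = (-1)^Suc m * (a + c / f 0) * (\<Prod>i\<in>{1..Suc m}. w i / f i)"
    unfolding y'_def using dy cu by (simp add: coeff_eq_0 P_def)
  have "degree ([:q (Suc (Suc m)), - w (Suc (Suc m)):] * y') \<le> Suc (Suc m)"
    using degree_linear_mult[of "q (Suc (Suc m))" "- w (Suc (Suc m))" y'] dy' by linarith
  then have du2: "degree (snd (shoot_poly f q w a c (Suc (Suc m)))) \<le> Suc (Suc m)"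
    unfolding u2 using du by (intro degree_add_le) auto
  have "coeff (snd (shoot_poly f q w a c (Suc (Suc m)))) (Suc (Suc m)) = - w (Suc (Suc m)) * coeff y' (Suc m)"
    unfolding u2 coeff_add coeff_linear_mult using du dy' by (simp add: coeff_eq_0)
  with cy' dy' du2 y2 show ?case by simp
qed

section \<open>Eigenvalues as roots of the characteristic polynomial\<close>

definition scale_fun :: "real \<Rightarrow> (nat \<Rightarrow> real) \<Rightarrow> nat \<Rightarrow> real" where
  "scale_fun c y n = c * y n"

interpretation fun_vs: vector_space scale_fun
  by unfold_locales (auto simp: scale_fun_def fun_eq_iff algebra_simps)

interpretation initial_data: finite_dimensional_vector_space_pair_1
  "scaleR :: real \<Rightarrow> real \<times> real \<Rightarrow> real \<times> real" Basis scale_fun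
  rewrites "module.span (*\<^sub>R) = span" and "vector_space.dim (*\<^sub>R) = dim"
  by unfold_locales (simp_all add: span_raw_def dim_raw_def)

lemma multiplicity_ev_eq_dim: "multiplicity_ev N f q w A B lam = fun_vs.dim (sol_space N f q w A B lam)"
proof -
  have "scale_fun = (\<lambda>c y n. c * y n)" by (intro ext) (simp add: scale_fun_def)
  then show ?thesis by (simp add: multiplicity_ev_def)
qed

lemma satisfies_bc_K_minus_I_iff:
  "satisfies_bc N f K (- mat 1) y \<longleftrightarrow>
    K$1$1 * y 0 + K$1$2 * (f 0 * fwd y 0) = y N \<and> K$2$1 * y 0 + K$2$2 * (f 0 * fwd y 0) = f N * fwd y N"
  by (simp add: satisfies_bc_def vec_eq_iff forall_2 matrix_vector_mult_def sum_2 mat_def vector_2 algebra_simps)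

locale sl_problem =
  fixes N :: nat and f q w :: "nat \<Rightarrow> real"
  assumes N_ge_2: "N \<ge> 2"
    and f_nonzero: "\<And>n. n \<le> N \<Longrightarrow> f n \<noteq> 0"
    and w_pos: "\<And>n. 1 \<le> n \<Longrightarrow> n \<le> N \<Longrightarrow> w n > 0"
begin

text \<open>The solution with initial data \<open>(a, c)\<close>, extended to \<open>N + 1\<close> by its flux at \<open>N\<close> and by 0 beyond,
  as in \<open>sol_space\<close>.\<close>

definition sol :: "real \<Rightarrow> real \<Rightarrow> real \<Rightarrow> nat \<Rightarrow> real" where
  "sol lam a c n = (if n \<le> N then fst (shoot f q w lam a c n)
     else if n = N + 1 then fst (shoot f q w lam a c N) + snd (shoot f q w lam a c N) / f N else 0)"

lemma sol_0: "sol lam a c 0 = a"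
  by (simp add: sol_def)

lemma sol_N: "sol lam a c N = fst (shoot f q w lam a c N)"
  by (simp add: sol_def)

lemma sol_flux:
  assumes "n \<le> N"
  shows "f n * fwd (sol lam a c) n = snd (shoot f q w lam a c n)"
proof (cases "n = N")
  case True
  then show ?thesis using f_nonzero[of N] by (simp add: fwd_def sol_def field_simps)
next
  case False
  with assms have "Suc n \<le> N" by simp
  then show ?thesis using f_nonzero[of n] assms by (simp add: fwd_def sol_def Let_def field_simps)
qed

lemma sol_flux_0: "f 0 * fwd (sol lam a c) 0 = c"
  using sol_flux[of 0 lam a c] by simp

lemma sol_solves_eq: "solves_eq N f q w lam (sol lam a c)"
  unfolding solves_eq_def
proof
  fix n assume n: "n \<in> {1..N}"
  then obtain m where m: "n = Suc m" by (cases n) auto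
  have "f n * fwd (sol lam a c) n - f (n - 1) * fwd (sol lam a c) (n - 1) =
      snd (shoot f q w lam a c n) - snd (shoot f q w lam a c m)"
    using sol_flux[of n] sol_flux[of m] n m by auto
  also have "\<dots> = (q n - lam * w n) * sol lam a c n"
    using n m by (simp add: Let_def sol_def)
  finally show "- (f n * fwd (sol lam a c) n - f (n - 1) * fwd (sol lam a c) (n - 1)) + q n * sol lam a c n =
      lam * w n * sol lam a c n" by (simp add: algebra_simps)
qed

lemma solution_eq_sol:
  assumes vanish: "\<forall>n > N + 1. y n = 0" and solves: "solves_eq N f q w lam y"
  shows "y = sol lam (y 0) (f 0 * fwd y 0)"
proof -
  let ?Y = "shoot f q w lam (y 0) (f 0 * fwd y 0)"
  have Y: "?Y n = (y n, f n * fwd y n)" if "n \<le> N" for n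
    using that
  proof (induction n)
    case (Suc n)
    then have IH: "?Y n = (y n, f n * fwd y n)" by simp
    have eq: "- (f (Suc n) * fwd y (Suc n) - f n * fwd y n) + q (Suc n) * y (Suc n) = lam * w (Suc n) * y (Suc n)"
      using solves Suc.prems unfolding solves_eq_def by force
    have "fst (?Y (Suc n)) = y (Suc n)"
      using IH f_nonzero[of n] Suc.prems by (simp add: Let_def fwd_def)
    moreover have "snd (?Y (Suc n)) = snd (?Y n) + (q (Suc n) - lam * w (Suc n)) * fst (?Y (Suc n))"
      by (simp add: Let_def)
    ultimately show ?case
      using IH eq by (simp add: algebra_simps)
  qed simp
  show ?thesis
  proof
    fix n
    consider "n \<le> N" | "n = N + 1" | "n > N + 1" by linarith
    then show "y n = sol lam (y 0) (f 0 * fwd y 0) n"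
      by cases (use Y[of n] Y[of N] f_nonzero[of N] vanish in \<open>auto simp: sol_def fwd_def\<close>)
  qed
qed

text \<open>The fundamental solutions \<open>\<theta>\<close> (\<open>\<theta>\<^sub>0 = 1\<close>, \<open>f\<^sub>0\<Delta>\<theta>\<^sub>0 = 0\<close>) and \<open>\<phi>\<close> (\<open>\<phi>\<^sub>0 = 0\<close>, \<open>f\<^sub>0\<Delta>\<phi>\<^sub>0 = 1\<close>) and their
  fluxes \<open>f\<^sub>k\<Delta>\<theta>\<^sub>k\<close>, \<open>f\<^sub>k\<Delta>\<phi>\<^sub>k\<close>, as polynomials in \<open>\<lambda>\<close>.\<close>

definition theta :: "nat \<Rightarrow> real poly" where "theta k = fst (shoot_poly f q w 1 0 k)"
definition theta_flux :: "nat \<Rightarrow> real poly" where "theta_flux k = snd (shoot_poly f q w 1 0 k)"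
definition phi :: "nat \<Rightarrow> real poly" where "phi k = fst (shoot_poly f q w 0 1 k)"
definition phi_flux :: "nat \<Rightarrow> real poly" where "phi_flux k = snd (shoot_poly f q w 0 1 k)"

lemma shoot_theta_phi:
  "shoot f q w z a c k =
    (a * poly_of_real (theta k) z + c * poly_of_real (phi k) z,
     a * poly_of_real (theta_flux k) z + c * poly_of_real (phi_flux k) z)"
  unfolding theta_def theta_flux_def phi_def phi_flux_def by (rule shoot_eq_poly)

lemma wronskian:
  "poly_of_real (theta k) z * poly_of_real (phi_flux k) z - poly_of_real (phi k) z * poly_of_real (theta_flux k) z
    = (1 :: 'a::real_field)"
  using shoot_wronskian[of f q w z k] by (simp add: shoot_theta_phi)

lemma wronskian_real: "poly (theta k) r * poly (phi_flux k) r - poly (phi k) r * poly (theta_flux k) r = 1"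
  using wronskian[of k r] by simp

lemma sol_linear_comb: "sol lam a c n = a * sol lam 1 0 n + c * sol lam 0 1 n"
  by (simp add: sol_def shoot_theta_phi algebra_simps add_divide_distrib)

lemma sol_eq_0_iff: "sol lam a c = 0 \<longleftrightarrow> a = 0 \<and> c = 0"
proof
  assume zero: "sol lam a c = 0"
  have "a = sol lam a c 0" by (simp add: sol_0)
  with zero have "a = 0" by simp
  from zero sol_flux_0[of lam a c] have "c = 0" by (simp add: fwd_def)
  with \<open>a = 0\<close> show "a = 0 \<and> c = 0" ..
qed (simp add: fun_eq_iff sol_linear_comb[of lam 0 0])

lemma sol_add: "sol lam (a + a') (c + c') = sol lam a c + sol lam a' c'"
  by (simp add: fun_eq_iff sol_linear_comb[of lam "a + a'"] sol_linear_comb[of lam a]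
      sol_linear_comb[of lam a'] algebra_simps)

lemma sol_scale: "sol lam (t * a) (t * c) = scale_fun t (sol lam a c)"
  unfolding fun_eq_iff scale_fun_def sol_linear_comb[of lam "t * a"] sol_linear_comb[of lam a]
  by (simp add: algebra_simps)

lemma sol_linear: "Vector_Spaces.linear (*\<^sub>R) scale_fun (\<lambda>(a, c). sol lam a c)"
  unfolding Vector_Spaces.linear_iff
  by (simp add: real_vector.vector_space_axioms fun_vs.vector_space_axioms sol_add sol_scale)

lemma sol_inj: "inj (\<lambda>(a, c). sol lam a c)"
proof (rule injI, clarsimp)
  fix a c a' c' assume "sol lam a c = sol lam a' c'"
  then have "sol lam (a - a') (c - c') = 0"
    using sol_add[of lam "a - a'" a' "c - c'" c'] by simp
  then show "a = a' \<and> c = c'" by (simp add: sol_eq_0_iff)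
qed

definition bc_kernel :: "real^2^2 \<Rightarrow> real \<Rightarrow> (real \<times> real) set" where
  "bc_kernel K lam = {(a, c). (poly (theta N) lam - K$1$1) * a + (poly (phi N) lam - K$1$2) * c = 0 \<and>
                             (poly (theta_flux N) lam - K$2$1) * a + (poly (phi_flux N) lam - K$2$2) * c = 0}"

lemma sol_space_eq: "sol_space N f q w K (- mat 1) lam = (\<lambda>(a, c). sol lam a c) ` bc_kernel K lam"
proof (intro set_eqI iffI)
  fix y assume "y \<in> sol_space N f q w K (- mat 1) lam"
  then have vanish: "\<forall>n > N + 1. y n = 0" and solves: "solves_eq N f q w lam y"
    and bc: "satisfies_bc N f K (- mat 1) y"
    by (auto simp: sol_space_def)
  define a c where "a = y 0" and "c = f 0 * fwd y 0"
  have y: "y = sol lam a c" unfolding a_def c_def by (rule solution_eq_sol[OF vanish solves])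
  have "K$1$1 * a + K$1$2 * c = a * poly (theta N) lam + c * poly (phi N) lam"
    and "K$2$1 * a + K$2$2 * c = a * poly (theta_flux N) lam + c * poly (phi_flux N) lam"
    using bc sol_flux[of N lam a c] unfolding satisfies_bc_K_minus_I_iff a_def[symmetric] c_def[symmetric]
    by (simp_all add: y sol_N shoot_theta_phi)
  then have "(a, c) \<in> bc_kernel K lam"
    unfolding bc_kernel_def mem_Collect_eq prod.case left_diff_distrib
    by (simp only: mult.commute) linarith
  with y show "y \<in> (\<lambda>(a, c). sol lam a c) ` bc_kernel K lam" by force
next
  fix y assume "y \<in> (\<lambda>(a, c). sol lam a c) ` bc_kernel K lam"
  then obtain a c where y: "y = sol lam a c" and ac: "(a, c) \<in> bc_kernel K lam" by auto
  have "satisfies_bc N f K (- mat 1) y"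
    using ac sol_flux[of N lam a c]
    unfolding satisfies_bc_K_minus_I_iff y sol_0 sol_flux_0 sol_N shoot_theta_phi bc_kernel_def
    by (simp add: algebra_simps)
  moreover have "\<forall>n > N + 1. y n = 0" by (simp add: y sol_def)
  ultimately show "y \<in> sol_space N f q w K (- mat 1) lam"
    using sol_solves_eq[of lam a c] by (simp add: sol_space_def y)
qed

lemma multiplicity_eq_dim_bc_kernel: "multiplicity_ev N f q w K (- mat 1) lam = dim (bc_kernel K lam)"
  unfolding multiplicity_ev_eq_dim sol_space_eq
  by (rule initial_data.dim_image_eq[OF sol_linear]) (use sol_inj in \<open>auto intro: inj_on_subset\<close>)

text \<open>Since \<open>det \<Phi>(\<lambda>) = det K = 1\<close>, \<open>det (\<Phi>(\<lambda>) - K) = 2 - tr (adj K \<cdot> \<Phi>(\<lambda>))\<close> is a polynomial in \<open>\<lambda>\<close>,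
  where \<open>\<Phi> = ((theta N, phi N), (theta_flux N, phi_flux N))\<close> is the transfer matrix.\<close>

definition char_poly :: "real^2^2 \<Rightarrow> real poly" where
  "char_poly K = [:2:] - (smult (K$2$2) (theta N) - smult (K$1$2) (theta_flux N)
                         - smult (K$2$1) (phi N) + smult (K$1$1) (phi_flux N))"

lemma poly_char_poly:
  assumes "det K = 1"
  shows "poly_of_real (char_poly K) z =
    (poly_of_real (theta N) z - of_real (K$1$1)) * (poly_of_real (phi_flux N) z - of_real (K$2$2))
    - (poly_of_real (phi N) z - of_real (K$1$2)) * (poly_of_real (theta_flux N) z - (of_real (K$2$1) :: 'a::real_field))"
proof -
  from assms have "K$1$1 * K$2$2 - K$1$2 * K$2$1 = 1" by (simp add: det_2)
  then have "of_real (K$1$1) * of_real (K$2$2) - of_real (K$1$2) * of_real (K$2$1) = (1 :: 'a)"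
    by (metis of_real_1 of_real_diff of_real_mult)
  with wronskian[of N z] show ?thesis
    by (simp add: char_poly_def algebra_simps)
qed

lemma poly_char_poly_real:
  assumes "det K = 1"
  shows "poly (char_poly K) r = (poly (theta N) r - K$1$1) * (poly (phi_flux N) r - K$2$2)
    - (poly (phi N) r - K$1$2) * (poly (theta_flux N) r - K$2$1)"
  using poly_char_poly[OF assms, of r] by simp

abbreviation transfer_eq :: "real^2^2 \<Rightarrow> real \<Rightarrow> bool" where
  "transfer_eq K r \<equiv> poly (theta N) r = K$1$1 \<and> poly (phi N) r = K$1$2 \<and>
     poly (theta_flux N) r = K$2$1 \<and> poly (phi_flux N) r = K$2$2"

lemma multiplicity_ev_eq:
  assumes "det K = 1"
  shows "multiplicity_ev N f q w K (- mat 1) r =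
    (if transfer_eq K r then 2 else if poly (char_poly K) r = 0 then 1 else 0)"
  unfolding multiplicity_eq_dim_bc_kernel bc_kernel_def dim_kernel2 poly_char_poly_real[OF assms] by auto

lemma is_eigenvalue_iff:
  assumes "det K = 1"
  shows "is_eigenvalue N f q w K (- mat 1) r \<longleftrightarrow> poly (char_poly K) r = 0"
proof -
  have "is_eigenvalue N f q w K (- mat 1) r \<longleftrightarrow> (\<exists>(a, c) \<in> bc_kernel K r. sol r a c \<noteq> (\<lambda>_. 0))"
    unfolding is_eigenvalue_def sol_space_eq by fastforce
  also have "\<dots> \<longleftrightarrow> (\<exists>(a, c) \<in> bc_kernel K r. (a, c) \<noteq> (0, 0))"
    by (simp add: sol_eq_0_iff[unfolded zero_fun_def])
  also have "\<dots> \<longleftrightarrow> poly (char_poly K) r = 0"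
  proof
    assume "\<exists>(a, c) \<in> bc_kernel K r. (a, c) \<noteq> (0, 0)"
    then obtain a c where ac: "(a, c) \<in> bc_kernel K r" "(a, c) \<noteq> (0, 0)" by blast
    show "poly (char_poly K) r = 0"
    proof (rule ccontr)
      assume "poly (char_poly K) r \<noteq> 0"
      then have "bc_kernel K r = {(0, 0)}"
        unfolding bc_kernel_def poly_char_poly_real[OF assms] by (rule kernel2_trivial)
      with ac show False by simp
    qed
  next
    assume "poly (char_poly K) r = 0"
    then obtain a c where "(a, c) \<noteq> (0, 0)" "(a, c) \<in> bc_kernel K r"
      unfolding bc_kernel_def poly_char_poly_real[OF assms]
      by (rule kernel2_nontrivial) auto
    then show "\<exists>(a, c) \<in> bc_kernel K r. (a, c) \<noteq> (0, 0)" by blast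
  qed
  finally show ?thesis .
qed

subsection \<open>Multiplicity as order of the root\<close>

lemma shoot_nonvanishing:
  fixes z a c :: "'a::real_field"
  assumes "(a, c) \<noteq> (0, 0)"
  shows "fst (shoot f q w z a c 1) \<noteq> 0 \<or> fst (shoot f q w z a c 2) \<noteq> 0"
proof (rule ccontr)
  let ?Y = "shoot f q w z a c"
  assume "\<not> ?thesis"
  then have y1: "fst (?Y 1) = 0" and y2: "fst (?Y 2) = 0" by auto
  have "fst (?Y 2) = fst (?Y 1) + snd (?Y 1) * of_real (1 / f 1)" by (simp add: Let_def numeral_2_eq_2)
  with y1 y2 f_nonzero[of 1] N_ge_2 have "snd (?Y 1) = 0" by simp
  moreover have "snd (?Y 1) = c + (of_real (q 1) - z * of_real (w 1)) * fst (?Y 1)" by (simp add: Let_def)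
  ultimately have "c = 0" using y1 by simp
  moreover have "fst (?Y 1) = a + c * of_real (1 / f 0)" by (simp add: Let_def)
  ultimately show False using y1 assms by simp
qed

lemma shoot_energy_pos:
  fixes z a c :: "'a::real_normed_field"
  assumes "(a, c) \<noteq> (0, 0)"
  shows "(\<Sum>k\<in>{1..N}. w k * (norm (fst (shoot f q w z a c k)))^2) > 0"
proof -
  let ?e = "\<lambda>k. w k * (norm (fst (shoot f q w z a c k)))^2"
  have pos: "0 < u * x + v * y" if "0 < u" "0 < v" "0 \<le> x" "0 \<le> y" "0 < x \<or> 0 < y" for u v x y :: real
    using that by (auto intro: add_pos_nonneg add_nonneg_pos)
  have "?e 1 + ?e 2 > 0"
    by (rule pos) (use shoot_nonvanishing[OF assms] w_pos[of 1] w_pos[of 2] N_ge_2 in auto)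
  also have "?e 1 + ?e 2 = (\<Sum>k\<in>{1, 2}. ?e k)" by simp
  also have "\<dots> \<le> (\<Sum>k\<in>{1..N}. ?e k)"
    by (rule sum_mono2) (use N_ge_2 w_pos in \<open>auto intro!: mult_nonneg_nonneg order.strict_implies_order[OF w_pos]\<close>)
  finally show ?thesis .
qed

definition gram :: "real \<Rightarrow> (nat \<Rightarrow> real poly) \<Rightarrow> (nat \<Rightarrow> real poly) \<Rightarrow> real poly" where
  "gram r u v = (\<Sum>k\<in>{1..N}. smult (w k * poly (u k) r) (v k))"

lemma gram_sym: "poly (gram r theta phi) r = poly (gram r phi theta) r"
  by (simp add: gram_def poly_sum mult_ac)

lemma gram_pos_def:
  assumes "(x1, x2) \<noteq> (0, 0)"
  shows "x1^2 * poly (gram r theta theta) r + 2 * x1 * x2 * poly (gram r theta phi) r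
    + x2^2 * poly (gram r phi phi) r > 0"
proof -
  have "x1^2 * poly (gram r theta theta) r + 2 * x1 * x2 * poly (gram r theta phi) r
      + x2^2 * poly (gram r phi phi) r = (\<Sum>k\<in>{1..N}. w k * (norm (fst (shoot f q w r x1 x2 k)))^2)"
    by (simp add: gram_def poly_sum sum_distrib_left shoot_theta_phi flip: sum.distrib)
      (simp add: power2_eq_square algebra_simps)
  with shoot_energy_pos[OF assms] show ?thesis by simp
qed

lemma green_transfer:
  fixes r lam :: real
  shows "poly (theta N) r * poly (theta_flux N) lam - poly (theta_flux N) r * poly (theta N) lam
      = (r - lam) * poly (gram r theta theta) lam"
    and "poly (theta N) r * poly (phi_flux N) lam - poly (theta_flux N) r * poly (phi N) lam - 1
      = (r - lam) * poly (gram r theta phi) lam"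
    and "poly (phi N) r * poly (theta_flux N) lam - poly (phi_flux N) r * poly (theta N) lam + 1
      = (r - lam) * poly (gram r phi theta) lam"
    and "poly (phi N) r * poly (phi_flux N) lam - poly (phi_flux N) r * poly (phi N) lam
      = (r - lam) * poly (gram r phi phi) lam"
proof -
  note green = shoot_green[of f q w r _ _ N lam, unfolded of_real_eq_id id_def shoot_theta_phi]
  show "poly (theta N) r * poly (theta_flux N) lam - poly (theta_flux N) r * poly (theta N) lam
      = (r - lam) * poly (gram r theta theta) lam"
    using green[of 1 0 1 0] by (simp add: gram_def poly_sum mult_ac)
  show "poly (theta N) r * poly (phi_flux N) lam - poly (theta_flux N) r * poly (phi N) lam - 1
      = (r - lam) * poly (gram r theta phi) lam"
    using green[of 1 0 0 1] by (simp add: gram_def poly_sum mult_ac)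
  show "poly (phi N) r * poly (theta_flux N) lam - poly (phi_flux N) r * poly (theta N) lam + 1
      = (r - lam) * poly (gram r phi theta) lam"
    using green[of 0 1 1 0] by (simp add: gram_def poly_sum mult_ac)
  show "poly (phi N) r * poly (phi_flux N) lam - poly (phi_flux N) r * poly (phi N) lam
      = (r - lam) * poly (gram r phi phi) lam"
    using green[of 0 1 0 1] by (simp add: gram_def poly_sum mult_ac)
qed

text \<open>The slopes of the transfer matrix: \<open>\<Phi>(\<lambda>) = \<Phi>(r) + (r - \<lambda>) slope(\<lambda>)\<close>, see \<open>transfer_taylor\<close>.\<close>

definition "slope11 r = smult (poly (phi N) r) (gram r theta theta) - smult (poly (theta N) r) (gram r phi theta)"
definition "slope12 r = smult (poly (phi N) r) (gram r theta phi) - smult (poly (theta N) r) (gram r phi phi)"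
definition "slope21 r = smult (poly (phi_flux N) r) (gram r theta theta) - smult (poly (theta_flux N) r) (gram r phi theta)"
definition "slope22 r = smult (poly (phi_flux N) r) (gram r theta phi) - smult (poly (theta_flux N) r) (gram r phi phi)"

lemma transfer_taylor:
  fixes r lam :: real
  shows "poly (theta N) lam = poly (theta N) r + (r - lam) * poly (slope11 r) lam"
    and "poly (phi N) lam = poly (phi N) r + (r - lam) * poly (slope12 r) lam"
    and "poly (theta_flux N) lam = poly (theta_flux N) r + (r - lam) * poly (slope21 r) lam"
    and "poly (phi_flux N) lam = poly (phi_flux N) r + (r - lam) * poly (slope22 r) lam"
  using unimodular_perturbation[OF green_transfer[of r lam] wronskian_real[of N r]]
  by (simp_all add: slope11_def slope12_def slope21_def slope22_def)

definition char_lin :: "real^2^2 \<Rightarrow> real \<Rightarrow> real poly" where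
  "char_lin K r = smult (poly (theta N) r - K$1$1) (slope22 r) + smult (poly (phi_flux N) r - K$2$2) (slope11 r)
     - smult (poly (phi N) r - K$1$2) (slope21 r) - smult (poly (theta_flux N) r - K$2$1) (slope12 r)"

definition char_quad :: "real \<Rightarrow> real poly" where
  "char_quad r = slope11 r * slope22 r - slope12 r * slope21 r"

lemma char_poly_taylor:
  assumes "det K = 1"
  shows "char_poly K = [:poly (char_poly K) r:] + [:r, -1:] * char_lin K r + [:r, -1:]^2 * char_quad r"
proof (rule poly_ext)
  fix lam :: real
  let ?d11 = "poly (theta N) r - K$1$1" and ?d12 = "poly (phi N) r - K$1$2"
    and ?d21 = "poly (theta_flux N) r - K$2$1" and ?d22 = "poly (phi_flux N) r - K$2$2"
  have "poly (char_poly K) lam =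
      (?d11 + (r - lam) * poly (slope11 r) lam) * (?d22 + (r - lam) * poly (slope22 r) lam)
    - (?d12 + (r - lam) * poly (slope12 r) lam) * (?d21 + (r - lam) * poly (slope21 r) lam)"
    unfolding poly_char_poly_real[OF assms] transfer_taylor[of lam r] by (simp add: algebra_simps)
  also have "\<dots> = (?d11 * ?d22 - ?d12 * ?d21) + (r - lam) * poly (char_lin K r) lam
      + (r - lam)^2 * poly (char_quad r) lam"
    unfolding det2_perturbation by (simp add: char_lin_def char_quad_def)
  also have "?d11 * ?d22 - ?d12 * ?d21 = poly (char_poly K) r"
    by (simp add: poly_char_poly_real[OF assms])
  finally show "poly (char_poly K) lam =
      poly ([:poly (char_poly K) r:] + [:r, -1:] * char_lin K r + [:r, -1:]^2 * char_quad r) lam"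
    by (simp add: power2_eq_square algebra_simps)
qed

lemma double_root_factor:
  assumes "det K = 1" and "transfer_eq K r"
  shows "char_poly K = [:-r, 1:]^2 * char_quad r" and "poly (char_quad r) r > 0"
proof -
  have "poly (char_poly K) r = 0" "char_lin K r = 0"
    using assms by (simp_all add: poly_char_poly_real char_lin_def)
  moreover have "[:r, -1:]^2 = [:-r, 1:]^2" by (simp add: power2_eq_square)
  ultimately show "char_poly K = [:-r, 1:]^2 * char_quad r"
    using char_poly_taylor[OF assms(1), of r] by simp
  let ?A = "poly (theta N) r" and ?B = "poly (phi N) r" and ?C = "poly (theta_flux N) r" and ?D = "poly (phi_flux N) r"
  let ?G11 = "poly (gram r theta theta) r" and ?G12 = "poly (gram r theta phi) r" and ?G22 = "poly (gram r phi phi) r"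
  have "poly (char_quad r) r = (?B * ?G11 - ?A * ?G12) * (?D * ?G12 - ?C * ?G22) - (?B * ?G12 - ?A * ?G22) * (?D * ?G11 - ?C * ?G12)"
    by (simp add: char_quad_def slope11_def slope12_def slope21_def slope22_def gram_sym)
  also have "\<dots> = (?A * ?D - ?B * ?C) * (?G11 * ?G22 - ?G12 * ?G12)"
    by (simp add: algebra_simps)
  also have "\<dots> = ?G11 * ?G22 - ?G12 * ?G12" using wronskian_real[of N r] by simp
  also have "\<dots> > 0" by (rule pos_def_form_det_pos) (rule gram_pos_def)
  finally show "poly (char_quad r) r > 0" .
qed

lemma simple_root_factor:
  assumes det: "det K = 1" and root: "poly (char_poly K) r = 0" and ne: "\<not> transfer_eq K r"
  shows "char_poly K = [:-r, 1:] * - (char_lin K r + [:r, -1:] * char_quad r)"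
    and "poly (char_lin K r) r \<noteq> 0"
proof -
  show "char_poly K = [:-r, 1:] * - (char_lin K r + [:r, -1:] * char_quad r)"
    by (subst char_poly_taylor[OF det, of r], rule poly_ext) (simp add: root algebra_simps power2_eq_square)
  have "poly (char_lin K r) r =
      (poly (theta N) r - K$1$1) * (poly (phi_flux N) r * poly (gram r theta phi) r - poly (theta_flux N) r * poly (gram r phi phi) r)
    + (poly (phi_flux N) r - K$2$2) * (poly (phi N) r * poly (gram r theta theta) r - poly (theta N) r * poly (gram r theta phi) r)
    - (poly (phi N) r - K$1$2) * (poly (phi_flux N) r * poly (gram r theta theta) r - poly (theta_flux N) r * poly (gram r theta phi) r)
    - (poly (theta_flux N) r - K$2$1) * (poly (phi N) r * poly (gram r theta phi) r - poly (theta N) r * poly (gram r phi phi) r)"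
    by (simp add: char_lin_def slope11_def slope12_def slope21_def slope22_def gram_sym)
  also have "\<dots> \<noteq> 0"
  proof (rule det2_first_order_nonzero[OF wronskian_real])
    show "K$1$1 * K$2$2 - K$1$2 * K$2$1 = 1" using det by (simp add: det_2)
    show "(poly (theta N) r - K$1$1) * (poly (phi_flux N) r - K$2$2) - (poly (phi N) r - K$1$2) * (poly (theta_flux N) r - K$2$1) = 0"
      using root by (simp add: poly_char_poly_real[OF det])
  qed (use ne gram_pos_def in auto)
  finally show "poly (char_lin K r) r \<noteq> 0" .
qed

lemma order_char_poly:
  assumes det: "det K = 1" and root: "poly (char_poly K) r = 0"
  shows "order r (char_poly K) = multiplicity_ev N f q w K (- mat 1) r"
proof (cases "transfer_eq K r")
  case True
  with double_root_factor[OF det True] show ?thesis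
    by (simp add: order_linear_power_mult multiplicity_ev_eq[OF det])
next
  case False
  note factor = simple_root_factor[OF det root False]
  from factor(1) have "char_poly K = [:-r, 1:]^1 * - (char_lin K r + [:r, -1:] * char_quad r)" by simp
  then have "order r (char_poly K) = 1"
    by (rule order_linear_power_mult) (use factor(2) in simp)
  with False root show ?thesis by (simp add: multiplicity_ev_eq[OF det])
qed

subsection \<open>Reality of the roots\<close>

text \<open>A complex root gives a complex eigenfunction \<open>y\<close>; Green's identity for \<open>y\<close> and \<open>conj y\<close> gives
  \<open>(conj z - z) \<Sum> w\<^sub>k |y\<^sub>k|\<^sup>2 = 0\<close>.\<close>

lemma char_poly_roots_real:
  assumes det: "det K = 1" and root: "poly (map_poly of_real (char_poly K)) (z :: complex) = 0"
  shows "z \<in> \<real>"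
proof -
  let ?k = "\<lambda>i j. of_real (K$i$j) :: complex"
  have "poly_of_real (char_poly K) z = 0" using root by (simp add: poly_of_real_def)
  then obtain a c where ac: "(a, c) \<noteq> (0, 0)"
    and k1: "(poly_of_real (theta N) z - ?k 1 1) * a + (poly_of_real (phi N) z - ?k 1 2) * c = 0"
    and k2: "(poly_of_real (theta_flux N) z - ?k 2 1) * a + (poly_of_real (phi_flux N) z - ?k 2 2) * c = 0"
    unfolding poly_char_poly[OF det] by (rule kernel2_nontrivial)
  let ?Y = "shoot f q w z a c" and ?Z = "shoot f q w (cnj z) (cnj a) (cnj c)"
  have "fst (?Y N) = ?k 1 1 * a + ?k 1 2 * c" "snd (?Y N) = ?k 2 1 * a + ?k 2 2 * c"
    using k1 k2 by (simp_all add: shoot_theta_phi algebra_simps)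
  then have "fst (?Z N) * snd (?Y N) - snd (?Z N) * fst (?Y N)
      = (?k 1 1 * ?k 2 2 - ?k 1 2 * ?k 2 1) * (cnj a * c - cnj c * a)"
    by (simp add: shoot_cnj algebra_simps)
  also have "?k 1 1 * ?k 2 2 - ?k 1 2 * ?k 2 1 = 1"
    using det by (simp add: det_2 flip: of_real_mult of_real_diff)
  finally have "(cnj z - z) * (\<Sum>k\<in>{1..N}. of_real (w k) * fst (?Y k) * fst (?Z k)) = 0"
    using shoot_green[of f q w "cnj z" "cnj a" "cnj c" N z a c] by simp
  moreover have "(\<Sum>k\<in>{1..N}. of_real (w k) * fst (?Y k) * fst (?Z k))
      = of_real (\<Sum>k\<in>{1..N}. w k * (norm (fst (?Y k)))^2)"
    by (simp add: shoot_cnj mult.assoc flip: complex_norm_square)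
  moreover have "(\<Sum>k\<in>{1..N}. w k * (norm (fst (?Y k)))^2) \<noteq> 0"
    using shoot_energy_pos[OF ac, of z] by linarith
  ultimately have "cnj z = z" by (simp only: mult_eq_0_iff of_real_eq_0_iff) simp
  then show ?thesis by (simp add: Reals_cnj_iff)
qed

lemma char_poly_splits:
  assumes "det K = 1"
  shows "char_poly K = smult (lead_coeff (char_poly K)) (\<Prod>x\<in>#proots (char_poly K). [:-x, 1:])"
    and "size (proots (char_poly K)) = degree (char_poly K)"
  using real_rooted_poly_splits[OF char_poly_roots_real[OF assms]] by auto

subsection \<open>Degree, leading coefficient and double roots\<close>

definition lead_factor :: real where
  "lead_factor = (\<Prod>i = 0..N - 1. 1 / f i) * (\<Prod>i = 1..N. w i)"

lemma lead_factor_pos: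
  assumes "(\<Prod>i = 0..N - 1. 1 / f i) > 0"
  shows "lead_factor > 0"
  unfolding lead_factor_def by (rule mult_pos_pos[OF assms prod_pos]) (use w_pos in auto)

lemma char_poly_top_coeff:
  "degree (char_poly K) \<le> N" "coeff (char_poly K) N = - ((-1)^N * (K$1$1 - f 0 * K$1$2) * lead_factor)"
proof -
  obtain M where M: "N = Suc M" using N_ge_2 by (cases N) auto
  let ?P = "\<Prod>i\<in>{1..M}. w i / f i"
  have th: "degree (theta N) \<le> M" "degree (theta_flux N) \<le> N" "coeff (theta_flux N) N = (-1)^N * ?P * w N"
    using shoot_poly_degree[of f q w 1 0 M] unfolding theta_def theta_flux_def M by auto
  have ph: "degree (phi N) \<le> M" "degree (phi_flux N) \<le> N" "coeff (phi_flux N) N = (-1)^N * (1 / f 0) * ?P * w N"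
    using shoot_poly_degree[of f q w 0 1 M] unfolding phi_def phi_flux_def M by auto
  show "degree (char_poly K) \<le> N"
    unfolding char_poly_def using th ph M
    by (intro degree_diff_le degree_add_le order_trans[OF degree_smult_le]) auto
  have "coeff (theta N) N = 0" "coeff (phi N) N = 0" using th ph M by (auto intro: coeff_eq_0)
  then have "coeff (char_poly K) N = K$1$2 * coeff (theta_flux N) N - K$1$1 * coeff (phi_flux N) N"
    using N_ge_2 by (simp add: char_poly_def coeff_pCons split: nat.splits)
  also have "\<dots> = - ((-1)^N * (K$1$1 - f 0 * K$1$2) * ((1 / f 0) * ?P * w N))"
    using f_nonzero[of 0] by (simp add: th(3) ph(3) field_simps)
  also have "(1 / f 0) * ?P * w N = lead_factor"
  proof -
    have "?P = (\<Prod>i\<in>{1..M}. 1 / f i) * (\<Prod>i\<in>{1..M}. w i)"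
      by (simp add: prod.distrib[symmetric])
    moreover have "(\<Prod>i = 0..N - 1. 1 / f i) = 1 / f 0 * (\<Prod>i\<in>{1..M}. 1 / f i)"
      by (simp add: M prod.atLeast_Suc_atMost)
    moreover have "(\<Prod>i = 1..N. w i) = (\<Prod>i\<in>{1..M}. w i) * w N"
      by (simp add: M atLeastAtMostSuc_conv)
    ultimately show ?thesis by (simp add: lead_factor_def)
  qed
  finally show "coeff (char_poly K) N = - ((-1)^N * (K$1$1 - f 0 * K$1$2) * lead_factor)" .
qed

lemma degree_char_poly:
  assumes "K$1$1 - f 0 * K$1$2 \<noteq> 0" "lead_factor \<noteq> 0"
  shows "degree (char_poly K) = N"
    and "lead_coeff (char_poly K) = - ((-1)^N * (K$1$1 - f 0 * K$1$2) * lead_factor)"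
proof -
  have "coeff (char_poly K) N \<noteq> 0" using assms by (simp add: char_poly_top_coeff)
  with char_poly_top_coeff(1) show deg: "degree (char_poly K) = N" by (simp add: le_antisym le_degree)
  show "lead_coeff (char_poly K) = - ((-1)^N * (K$1$1 - f 0 * K$1$2) * lead_factor)"
    by (simp add: deg char_poly_top_coeff)
qed

lemma eig_mset_eq_proots:
  assumes det: "det K = 1" and nz: "char_poly K \<noteq> 0"
  shows "finite (eigenvalues N f q w K (- mat 1))"
    and "eig_mset N f q w K (- mat 1) = proots (char_poly K)"
proof -
  have E: "eigenvalues N f q w K (- mat 1) = {x. poly (char_poly K) x = 0}"
    unfolding eigenvalues_def using is_eigenvalue_iff[OF det] by auto
  show fin: "finite (eigenvalues N f q w K (- mat 1))"
    unfolding E using nz by (rule poly_roots_finite)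
  show "eig_mset N f q w K (- mat 1) = proots (char_poly K)"
  proof (rule multiset_eqI)
    fix x
    have "count (eig_mset N f q w K (- mat 1)) x =
        (if x \<in> eigenvalues N f q w K (- mat 1) then multiplicity_ev N f q w K (- mat 1) x else 0)"
      unfolding eig_mset_def using fin by (simp add: count_sum sum.delta)
    also have "\<dots> = order x (char_poly K)"
      using order_char_poly[OF det] by (auto simp: E order_0I)
    finally show "count (eig_mset N f q w K (- mat 1)) x = count (proots (char_poly K)) x"
      using nz by simp
  qed
qed

lemma count_proots_char_poly:
  assumes det: "det K = 1" and nz: "char_poly K \<noteq> 0"
  shows "count (proots (char_poly K)) x \<le> 2"
    and "simple_ev N f q w K (- mat 1) x \<longleftrightarrow> count (proots (char_poly K)) x = 1"
proof -
  have count: "count (proots (char_poly K)) x =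
      (if poly (char_poly K) x = 0 then multiplicity_ev N f q w K (- mat 1) x else 0)"
    using nz order_char_poly[OF det, of x] by (simp add: order_0I)
  then show "count (proots (char_poly K)) x \<le> 2"
    by (simp add: multiplicity_ev_eq[OF det])
  from count show "simple_ev N f q w K (- mat 1) x \<longleftrightarrow> count (proots (char_poly K)) x = 1"
    by (simp add: simple_ev_def is_eigenvalue_iff[OF det])
qed

lemma double_root_cofactor:
  assumes det: "det K = 1" and nz: "char_poly K \<noteq> 0" and double: "count (proots (char_poly K)) r = 2"
  shows "poly (char_quad r) r = lead_coeff (char_poly K) * (\<Prod>x\<in>#proots (char_poly K) - {#r, r#}. r - x)"
    and "poly (char_quad r) r > 0"
proof -
  let ?p = "char_poly K" and ?R = "proots (char_poly K) - {#r, r#}"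
  from nz double have order: "order r ?p = 2" by simp
  then have "poly ?p r = 0" by (simp add: order_root)
  with order have "multiplicity_ev N f q w K (- mat 1) r = 2" by (simp add: order_char_poly[OF det])
  then have "transfer_eq K r" by (simp add: multiplicity_ev_eq[OF det] split: if_splits)
  note factor = double_root_factor[OF det this]
  show "poly (char_quad r) r > 0" by (rule factor(2))
  have roots: "proots ?p = add_mset r (add_mset r ?R)"
    using double by (auto simp: multiset_eq_iff)
  have "[:-r, 1:]^2 * char_quad r = ?p" using factor(1) by simp
  also have "\<dots> = smult (lead_coeff ?p) (\<Prod>x\<in>#proots ?p. [:-x, 1:])"
    by (rule char_poly_splits(1)[OF det])
  also have "\<dots> = [:-r, 1:]^2 * smult (lead_coeff ?p) (\<Prod>x\<in>#?R. [:-x, 1:])"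
    by (subst roots, rule poly_ext) (simp add: poly_prod_mset power2_eq_square algebra_simps)
  finally have "[:-r, 1:]^2 * char_quad r = [:-r, 1:]^2 * smult (lead_coeff ?p) (\<Prod>x\<in>#?R. [:-x, 1:])" .
  moreover have "[:-r, 1:]^2 \<noteq> (0 :: real poly)" by simp
  ultimately have "char_quad r = smult (lead_coeff ?p) (\<Prod>x\<in>#?R. [:-x, 1:])"
    using mult_left_cancel by blast
  then show "poly (char_quad r) r = lead_coeff ?p * (\<Prod>x\<in>#?R. r - x)"
    by (simp add: poly_prod_mset)
qed

text \<open>The cofactor \<open>char_quad r\<close> of a double root \<open>r\<close> is positive at \<open>r\<close>; comparing its sign with
  that of the leading coefficient times \<open>\<Prod>(r - x)\<close> over the other roots fixes the parity of
  the number of roots below \<open>r\<close>.\<close>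

lemma double_root_sign:
  assumes det: "det K = 1" and c: "K$1$1 - f 0 * K$1$2 \<noteq> 0" and lf: "lead_factor > 0"
    and double: "count (proots (char_poly K)) r = 2"
  shows "(-1)^size (filter_mset (\<lambda>x. x < r) (proots (char_poly K))) * (K$1$1 - f 0 * K$1$2) < 0"
proof -
  let ?p = "char_poly K" and ?c = "K$1$1 - f 0 * K$1$2"
  define R where "R = proots ?p - {#r, r#}"
  note deg = degree_char_poly[OF c less_imp_neq[OF lf, symmetric]]
  have nz: "?p \<noteq> 0" using deg(1) N_ge_2 by auto
  note quad = double_root_cofactor[OF det nz double, folded R_def]
  have roots: "proots ?p = add_mset r (add_mset r R)" and "r \<notin># R"
    using double by (auto simp: R_def multiset_eq_iff not_in_iff)
  define lt gt where "lt = size (filter_mset (\<lambda>x. x < r) R)" and "gt = size (filter_mset (\<lambda>x. r < x) R)"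
  have "R = filter_mset (\<lambda>x. x < r) R + filter_mset (\<lambda>x. r < x) R"
    using \<open>r \<notin># R\<close> by (intro multiset_eqI) (auto simp: not_in_iff)
  then have "size R = lt + gt" unfolding lt_def gt_def by (metis size_union)
  moreover have "size R + 2 = N" using char_poly_splits(2)[OF det] deg(1) roots by simp
  ultimately have "N + gt = lt + 2 * (gt + 1)" by simp
  then have parity: "(-1::real)^N * (-1)^gt = (-1)^lt"
    by (metis power_add power_minus1_even mult_1_right)
  define s where "s = (-1)^gt * (\<Prod>x\<in>#R. r - x)"
  have s: "s > 0" unfolding s_def gt_def by (rule sign_prod_mset_diff[OF \<open>r \<notin># R\<close>])
  have "(\<Prod>x\<in>#R. r - x) = (-1)^gt * s"
    by (simp add: s_def power_mult_distrib[symmetric] flip: power_add mult.assoc)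
  then have "(-1)^lt * ?c * (lead_factor * s) = - poly (char_quad r) r"
    by (simp add: quad(1) deg(2) flip: parity)
  with quad(2) have "(-1)^lt * ?c * (lead_factor * s) < 0" by simp
  moreover have "filter_mset (\<lambda>x. x < r) (proots ?p) = filter_mset (\<lambda>x. x < r) R"
    by (simp add: roots)
  ultimately show ?thesis
    using lf s by (simp add: lt_def mult_less_0_iff zero_less_mult_iff)
qed

lemma spectrum_sorted_roots:
  assumes det: "det K = 1" and c: "K$1$1 - f 0 * K$1$2 \<noteq> 0" and pos: "(\<Prod>i = 0..N - 1. 1 / f i) > 0"
  defines "L \<equiv> sorted_list_of_multiset (proots (char_poly K))"
  shows "eig N f q w K (- mat 1) = (!) L"
    and "simple_ev N f q w K (- mat 1) x \<longleftrightarrow> count (mset L) x = 1"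
    and "has_n_eigenvalues N f q w K (- mat 1) N"
    and "sorted L" "length L = N"
    and "double_parity L (K$1$1 - f 0 * K$1$2 < 0)"
proof -
  have lf: "lead_factor > 0" by (rule lead_factor_pos[OF pos])
  note deg = degree_char_poly[OF c less_imp_neq[OF lf, symmetric]]
  have nz: "char_poly K \<noteq> 0" using deg(1) N_ge_2 by auto
  note eig = eig_mset_eq_proots[OF det nz]
  have mL: "mset L = proots (char_poly K)" by (simp add: L_def)
  show "eig N f q w K (- mat 1) = (!) L"
    by (simp add: fun_eq_iff eig_def eig(2) L_def)
  show "simple_ev N f q w K (- mat 1) x \<longleftrightarrow> count (mset L) x = 1"
    unfolding mL by (rule count_proots_char_poly(2)[OF det nz])
  show "has_n_eigenvalues N f q w K (- mat 1) N"
    using eig char_poly_splits(2)[OF det] deg(1) by (simp add: has_n_eigenvalues_def)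
  show "sorted L" by (simp add: L_def)
  show "length L = N"
    using char_poly_splits(2)[OF det] deg(1) by (metis mL size_mset)
  have "even (length (filter (\<lambda>y. y < x) L)) = (K$1$1 - f 0 * K$1$2 < 0)"
    if "count (mset L) x = 2" for x
  proof -
    have "size (filter_mset (\<lambda>y. y < x) (proots (char_poly K))) = length (filter (\<lambda>y. y < x) L)"
      by (metis mL mset_filter size_mset)
    with double_root_sign[OF det c lf, of x] that
    have "(-1)^length (filter (\<lambda>y. y < x) L) * (K$1$1 - f 0 * K$1$2) < 0"
      by (simp add: mL)
    then show ?thesis by (cases "even (length (filter (\<lambda>y. y < x) L))") auto
  qed
  then show "double_parity L (K$1$1 - f 0 * K$1$2 < 0)"
    using count_proots_char_poly(1)[OF det nz] by (simp add: double_parity_def mL)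
qed

lemma conclusions_if_positive:
  assumes det: "det K = 1" and c: "K$1$1 - f 0 * K$1$2 > 0" and pos: "(\<Prod>i = 0..N - 1. 1 / f i) > 0"
  shows "conclusions N f q w K"
proof -
  have det': "det (- K) = 1" using det by (simp add: det_2)
  have c': "(- K)$1$1 - f 0 * (- K)$1$2 = - (K$1$1 - f 0 * K$1$2)" by simp
  define LP LM where "LP = sorted_list_of_multiset (proots (char_poly K))"
    and "LM = sorted_list_of_multiset (proots (char_poly (- K)))"
  have "K$1$1 - f 0 * K$1$2 \<noteq> 0" "(- K)$1$1 - f 0 * (- K)$1$2 \<noteq> 0" using c by auto
  note P = spectrum_sorted_roots[OF det this(1) pos, folded LP_def]
    and M = spectrum_sorted_roots[OF det' this(2) pos, folded LM_def]
  have P': "sorted LP" "length LP = N" "double_parity LP False" using P(4-6) c by auto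
  have M': "sorted LM" "length LM = N" "double_parity LM True" using M(4-6) c c' by auto
  have "LP \<noteq> []" "LM \<noteq> []" using P'(2) M'(2) N_ge_2 by auto
  have gapP: "count (mset LP) (LP ! j) = 1 \<and> count (mset LP) (LP ! (j + 1)) = 1"
    if "odd j" "1 \<le> j" "j \<le> N - 2" "LP ! j < LP ! (j + 1)" for j
    using double_parity_gap[OF P'(1,3), of j] that P'(2) N_ge_2 by simp
  have gapM: "count (mset LM) (LM ! j) = 1 \<and> count (mset LM) (LM ! (j + 1)) = 1"
    if "even j" "j \<le> N - 2" "LM ! j < LM ! (j + 1)" for j
    using double_parity_gap[OF M'(1,3), of j] that M'(2) N_ge_2 by simp
  show ?thesis
    unfolding conclusions_def Let_def P(1,2) M(1,2)
    using P(3) M(3) gapP gapM double_parity_first[OF P'(1,3) \<open>LP \<noteq> []\<close>]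
      double_parity_last[OF P'(1,3) \<open>LP \<noteq> []\<close>] double_parity_last[OF M'(1,3) \<open>LM \<noteq> []\<close>]
    by (simp add: P'(2) M'(2))
qed

end

theorem corollary3p3:
  fixes N :: nat and f q w :: "nat \<Rightarrow> real" and K :: "real^2^2"
  assumes "N \<ge> 2"
    and "\<And>n. n \<le> N \<Longrightarrow> f n \<noteq> 0"
    and "\<And>n. 1 \<le> n \<Longrightarrow> n \<le> N \<Longrightarrow> w n > 0"
    and "(\<Prod>i = 0..N - 1. 1 / f i) > 0"
    and "det K = 1"
  shows "(K $ 1 $ 1 - f 0 * K $ 1 $ 2 > 0 \<longrightarrow> conclusions N f q w K) \<and>
         (K $ 1 $ 1 - f 0 * K $ 1 $ 2 < 0 \<longrightarrow> conclusions N f q w (- K))"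
proof -
  interpret sl_problem N f q w using assms(1-3) by unfold_locales auto
  have "det (- K) = 1" using assms(5) by (simp add: det_2)
  then show ?thesis
    using conclusions_if_positive[OF assms(5) _ assms(4)] conclusions_if_positive[of "- K"] assms(4)
    by auto
qed

end
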